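(* Assume that (CVOP) has a solution, and let $\bar S\subseteq S_a$ be a solution of the associated projection (Pv) satisfying $Y_a=\operatorname{conv}\operatorname{proj}_y[\bar S]$. Then $\bar X:=\{x:(x,y)\in\bar S,\ y\notin\Gamma[\mathcal{X}]+(C\setminus\{0\})\}$ is a solution of (CVOP).
   Context: (CVOP): $\min\Gamma(x)$ w.r.t. $\le_C$ s.t. $x\in\mathcal{X}$, with $C\subseteq\mathbb{R}^m$ a non-trivial pointed solid convex cone, $\mathcal{X}\subseteq\mathbb{R}^n$ convex, $\Gamma$ $C$-convex; upper image $\mathcal{G}=\operatorname{cl}(\Gamma[\mathcal{X}]+C)$. $\bar x\in\mathcal{X}$ is a minimizer if $(\Gamma(\bar x)-C\setminus\{0\})\cap\Gamma[\mathcal{X}]=\emptyset$. $\bar X\subseteq\mathcal{X}$ is an infimizer if $\mathcal{G}=\operatorname{cl}\operatorname{conv}(\Gamma[\bar X]+C)$, and a solution if it is an infimizer consisting of minimizers only. $S_a=\{(x,y):x\in\mathcal{X},y\in\Gamma(x)+C\}$, $Y_a=\operatorname{proj}_y[S_a]$, and $\bar S\subseteq S_a$ is a solution of (Pv) if $Y_a\subseteq\operatorname{cl}\operatorname{conv}\operatorname{proj}_y[\bar S]$. *)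

theory Defs
  imports "HOL-Analysis.Analysis"
begin

definition msum :: "'b::real_vector set \<Rightarrow> 'b set \<Rightarrow> 'b set" where
  "msum A B = {a + b | a b. a \<in> A \<and> b \<in> B}"

definition ordering_cone :: "'b::euclidean_space set \<Rightarrow> bool" where
  "ordering_cone C \<longleftrightarrow> cone C \<and> convex C \<and> C \<noteq> {0} \<and> C \<noteq> UNIV
     \<and> C \<inter> uminus ` C = {0} \<and> interior C \<noteq> {}"

definition C_convex_on :: "'b::real_vector set \<Rightarrow> 'a::real_vector set \<Rightarrow> ('a \<Rightarrow> 'b) \<Rightarrow> bool" where
  "C_convex_on C X \<Gamma> \<longleftrightarrow> (\<forall>x\<in>X. \<forall>x'\<in>X. \<forall>t::real. 0 \<le> t \<and> t \<le> 1 \<longrightarrow>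
      t *\<^sub>R \<Gamma> x + (1 - t) *\<^sub>R \<Gamma> x' - \<Gamma> (t *\<^sub>R x + (1 - t) *\<^sub>R x') \<in> C)"

definition upper_image :: "'b::euclidean_space set \<Rightarrow> 'a set \<Rightarrow> ('a \<Rightarrow> 'b) \<Rightarrow> 'b set" where
  "upper_image C X \<Gamma> = closure (msum (\<Gamma> ` X) C)"

definition minimizer :: "'b::euclidean_space set \<Rightarrow> 'a set \<Rightarrow> ('a \<Rightarrow> 'b) \<Rightarrow> 'a \<Rightarrow> bool" where
  "minimizer C X \<Gamma> x \<longleftrightarrow> x \<in> X \<and>
     {\<Gamma> x - c | c. c \<in> C - {0}} \<inter> \<Gamma> ` X = {}"

definition infimizer :: "'b::euclidean_space set \<Rightarrow> 'a set \<Rightarrow> ('a \<Rightarrow> 'b) \<Rightarrow> 'a set \<Rightarrow> bool" where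
  "infimizer C X \<Gamma> Xb \<longleftrightarrow> Xb \<subseteq> X \<and>
     upper_image C X \<Gamma> = closure (convex hull (msum (\<Gamma> ` Xb) C))"

definition solution_CVOP :: "'b::euclidean_space set \<Rightarrow> 'a set \<Rightarrow> ('a \<Rightarrow> 'b) \<Rightarrow> 'a set \<Rightarrow> bool" where
  "solution_CVOP C X \<Gamma> Xb \<longleftrightarrow> infimizer C X \<Gamma> Xb \<and> (\<forall>x\<in>Xb. minimizer C X \<Gamma> x)"

definition S_a :: "'b::euclidean_space set \<Rightarrow> 'a set \<Rightarrow> ('a \<Rightarrow> 'b) \<Rightarrow> ('a \<times> 'b) set" where
  "S_a C X \<Gamma> = {(x, y). x \<in> X \<and> y \<in> msum {\<Gamma> x} C}"

definition Y_a :: "'b::euclidean_space set \<Rightarrow> 'a set \<Rightarrow> ('a \<Rightarrow> 'b) \<Rightarrow> 'b set" where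
  "Y_a C X \<Gamma> = snd ` S_a C X \<Gamma>"

definition solution_Pv :: "'b::euclidean_space set \<Rightarrow> 'a set \<Rightarrow> ('a \<Rightarrow> 'b) \<Rightarrow> ('a \<times> 'b) set \<Rightarrow> bool" where
  "solution_Pv C X \<Gamma> Sb \<longleftrightarrow> Sb \<subseteq> S_a C X \<Gamma> \<and>
     Y_a C X \<Gamma> \<subseteq> closure (convex hull (snd ` Sb))"

end

theory Submission
  imports Defs
begin

text \<open>
  Let \<open>P = \<Gamma>[X] + C\<close> and \<open>M = \<Gamma>[X] + (C - {0})\<close>. Since \<open>Y\<^sub>a = P\<close>, the hypothesis
  \<open>Y\<^sub>a = conv (proj\<^sub>y S\<^sub>b)\<close> makes \<open>P\<close> convex, and pointedness of \<open>C\<close> gives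
  \<open>M = P + (C - {0})\<close>. Hence a point of \<open>conv (proj\<^sub>y S\<^sub>b)\<close> outside \<open>M\<close> lies in the
  convex hull of the points of \<open>proj\<^sub>y S\<^sub>b\<close> outside \<open>M\<close>: lowering a vertex of
  positive weight that lies in \<open>M\<close> to \<open>P\<close> would put the point itself into \<open>M\<close>.
  The points of \<open>proj\<^sub>y S\<^sub>b\<close> outside \<open>M\<close> are the values \<open>\<Gamma> x\<close> for \<open>x \<in> X\<^sub>b\<close>, all
  minimizers, and the values of the minimizers of a given solution lie outside \<open>M\<close>;
  so they lie in \<open>conv \<Gamma>[X\<^sub>b]\<close>, which makes \<open>X\<^sub>b\<close> an infimizer.
\<close>

lemma msum_eq_set_plus: "msum A B = A + B"
  by (auto simp: msum_def set_plus_def)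

lemma ordering_cone_imp_convex_cone:
  assumes "ordering_cone C"
  shows "convex_cone C"
proof -
  from assms have "convex C" "cone C" "C \<inter> uminus ` C = {0}"
    by (simp_all add: ordering_cone_def)
  then have "0 \<in> C" by blast
  then show ?thesis
    unfolding convex_cone_def conic_def using \<open>convex C\<close> \<open>cone C\<close>
    by (auto simp: cone_def)
qed

lemma ordering_cone_add_nonzero:
  assumes "ordering_cone C" "a \<in> C" "b \<in> C - {0}"
  shows "a + b \<in> C - {0}"
proof -
  have "a + b \<in> C"
    using assms convex_cone_add ordering_cone_imp_convex_cone by blast
  moreover have "a + b \<noteq> 0"
  proof
    assume "a + b = 0"
    then have "b \<in> C \<inter> uminus ` C"
      using assms(2,3) by (auto simp: add_eq_0_iff)
    then show False
      using assms(1,3) unfolding ordering_cone_def by auto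
  qed
  ultimately show ?thesis by simp
qed

lemma set_plus_ordering_cone_strict:
  assumes "ordering_cone C"
  shows "(G + C) + (C - {0}) = G + (C - {0})"
proof -
  have "C + (C - {0}) = C - {0}"
  proof
    show "C + (C - {0}) \<subseteq> C - {0}"
      using ordering_cone_add_nonzero[OF assms] by (auto simp: set_plus_def)
    show "C - {0} \<subseteq> C + (C - {0})"
      using convex_cone_contains_0[OF ordering_cone_imp_convex_cone[OF assms]]
      by (force simp: set_plus_def)
  qed
  then show ?thesis
    by (simp add: add.assoc)
qed

lemma convex_hull_Diff_strictly_dominated:
  fixes A K V :: "'b::real_vector set"
  assumes "convex A" "cone K" "V \<subseteq> A" "y \<in> convex hull V"
    and "y \<notin> A + (K - {0})"
  shows "y \<in> convex hull (V - (A + (K - {0})))"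
proof -
  let ?M = "A + (K - {0})"
  obtain S u where S: "finite S" "S \<subseteq> V" "\<forall>v\<in>S. 0 \<le> u v" "sum u S = 1"
    and y: "(\<Sum>v\<in>S. u v *\<^sub>R v) = y"
    using assms(4) unfolding convex_hull_explicit by blast
  define S' where "S' = {v\<in>S. 0 < u v}"
  have S'_undominated: "v \<notin> ?M" if "v \<in> S'" for v
  proof
    assume "v \<in> ?M"
    then obtain a d where a: "a \<in> A" and d: "d \<in> K - {0}" and v: "v = a + d"
      by (auto simp: set_plus_def)
    have uv: "0 < u v" "v \<in> S"
      using that by (auto simp: S'_def)
    define f where "f w = (if w = v then a else w)" for w
    have "(\<Sum>w\<in>S. u w *\<^sub>R f w) \<in> A"
      using S assms(3) a by (intro convex_sum[OF S(1) assms(1) S(4)]) (auto simp: f_def)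
    moreover have "u v *\<^sub>R d \<in> K - {0}"
      using assms(2) d uv(1) unfolding cone_def by auto
    moreover have "y = (\<Sum>w\<in>S. u w *\<^sub>R f w) + u v *\<^sub>R d"
    proof -
      have "y = (\<Sum>w\<in>S. u w *\<^sub>R f w + (if w = v then u w *\<^sub>R d else 0))"
        unfolding y[symmetric] by (rule sum.cong) (auto simp: f_def v scaleR_add_right)
      also have "\<dots> = (\<Sum>w\<in>S. u w *\<^sub>R f w) + u v *\<^sub>R d"
        using S(1) uv(2) by (simp add: sum.distrib)
      finally show ?thesis .
    qed
    ultimately have "y \<in> ?M"
      by (metis set_plus_intro)
    then show False
      using assms(5) by simp
  qed
  have drop_zero_weights: "(\<Sum>v\<in>S. g v) = (\<Sum>v\<in>S'. g v)" if "\<And>v. u v = 0 \<Longrightarrow> g v = 0"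
    for g :: "'b \<Rightarrow> 'c::comm_monoid_add"
    using S(1,3) that unfolding S'_def by (intro sum.mono_neutral_right) force+
  have "(\<Sum>v\<in>S'. u v *\<^sub>R v) \<in> convex hull (V - ?M)"
    using S S'_undominated drop_zero_weights[of u]
    by (intro convex_sum convex_convex_hull hull_inc) (auto simp: S'_def)
  then show ?thesis
    using y drop_zero_weights[of "\<lambda>v. u v *\<^sub>R v"] by simp
qed

lemma msum_convex_hull_subset: "msum (convex hull S) T \<subseteq> convex hull (msum S T)"
  unfolding msum_eq_set_plus convex_hull_set_plus
  using hull_subset by (rule set_plus_mono2[OF order_refl])

lemma infimizer_if_image_in_convex_hull:
  assumes "infimizer C X \<Gamma> Xs" "Xb \<subseteq> X" "\<Gamma> ` Xs \<subseteq> convex hull (\<Gamma> ` Xb)"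
  shows "infimizer C X \<Gamma> Xb"
proof -
  let ?G = "upper_image C X \<Gamma>"
  have G: "?G = closure (convex hull (msum (\<Gamma> ` Xs) C))"
    using assms(1) by (simp add: infimizer_def)
  have "?G \<subseteq> closure (convex hull (msum (\<Gamma> ` Xb) C))"
  proof -
    have "msum (\<Gamma> ` Xs) C \<subseteq> msum (convex hull (\<Gamma> ` Xb)) C"
      using assms(3) by (auto simp: msum_def)
    also have "\<dots> \<subseteq> convex hull (msum (\<Gamma> ` Xb) C)"
      by (rule msum_convex_hull_subset)
    finally show ?thesis
      unfolding G by (intro closure_mono hull_minimal convex_convex_hull)
  qed
  moreover have "closure (convex hull (msum (\<Gamma> ` Xb) C)) \<subseteq> ?G"
  proof -
    have "msum (\<Gamma> ` Xb) C \<subseteq> ?G"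
      using assms(2) closure_subset unfolding upper_image_def msum_def by fast
    moreover have "convex ?G" "closed ?G"
      unfolding G by (simp_all add: convex_closure)
    ultimately show ?thesis
      by (intro closure_minimal hull_minimal)
  qed
  ultimately show ?thesis
    using assms(2) by (auto simp: infimizer_def)
qed

lemma minimizer_iff_not_strictly_dominated:
  "minimizer C X \<Gamma> x \<longleftrightarrow> x \<in> X \<and> \<Gamma> x \<notin> msum (\<Gamma> ` X) (C - {0})"
  unfolding minimizer_def msum_def by (force simp: eq_diff_eq)

lemma Y_a_eq_msum: "Y_a C X \<Gamma> = msum (\<Gamma> ` X) C"
  unfolding Y_a_def S_a_def msum_def by force

lemma S_a_not_strictly_dominated:
  assumes "(x, y) \<in> S_a C X \<Gamma>" "y \<notin> msum (\<Gamma> ` X) (C - {0})"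
  shows "minimizer C X \<Gamma> x" "y = \<Gamma> x"
proof -
  from assms(1) obtain c where "x \<in> X" "c \<in> C" "y = \<Gamma> x + c"
    by (auto simp: S_a_def msum_def)
  moreover from this assms(2) have "c = 0"
    by (auto simp: msum_def)
  ultimately show "minimizer C X \<Gamma> x" "y = \<Gamma> x"
    using assms(2) by (simp_all add: minimizer_iff_not_strictly_dominated)
qed

lemma snd_S_a_not_strictly_dominated:
  assumes "Sb \<subseteq> S_a C X \<Gamma>"
  shows "snd ` Sb - msum (\<Gamma> ` X) (C - {0})
           = \<Gamma> ` {x. \<exists>y. (x, y) \<in> Sb \<and> y \<notin> msum (\<Gamma> ` X) (C - {0})}"
  using assms S_a_not_strictly_dominated(2)[of _ _ C X \<Gamma>] by (force simp: image_iff)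

lemma minimizer_in_convex_hull_not_strictly_dominated:
  assumes "ordering_cone C" "Y_a C X \<Gamma> = convex hull V" "minimizer C X \<Gamma> x"
  shows "\<Gamma> x \<in> convex hull (V - msum (\<Gamma> ` X) (C - {0}))"
proof -
  define P where "P = \<Gamma> ` X + C"
  have P: "P = convex hull V"
    using assms(2) by (simp add: P_def Y_a_eq_msum msum_eq_set_plus)
  have M: "msum (\<Gamma> ` X) (C - {0}) = P + (C - {0})"
    using set_plus_ordering_cone_strict[OF assms(1)] by (simp add: P_def msum_eq_set_plus)
  have "x \<in> X" "\<Gamma> x \<notin> P + (C - {0})"
    using assms(3) by (simp_all add: minimizer_iff_not_strictly_dominated M)
  have "\<Gamma> x + 0 \<in> P"
    unfolding P_def using \<open>x \<in> X\<close>
      convex_cone_contains_0[OF ordering_cone_imp_convex_cone[OF assms(1)]]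
    by (intro set_plus_intro) auto
  then have "\<Gamma> x \<in> convex hull V"
    by (simp add: P)
  moreover have "convex P" "V \<subseteq> P" "cone C"
    using assms(1) by (simp_all add: P hull_subset ordering_cone_def)
  ultimately show ?thesis
    unfolding M using \<open>\<Gamma> x \<notin> P + (C - {0})\<close>
    by (intro convex_hull_Diff_strictly_dominated)
qed

theorem mainTheorem14:
  fixes C :: "'b::euclidean_space set" and X :: "'a::euclidean_space set"
    and \<Gamma> :: "'a \<Rightarrow> 'b" and Sb :: "('a \<times> 'b) set"
  assumes "ordering_cone C" and "convex X" and "C_convex_on C X \<Gamma>"
    and "\<exists>Xs. solution_CVOP C X \<Gamma> Xs"
    and "solution_Pv C X \<Gamma> Sb"
    and "Y_a C X \<Gamma> = convex hull (snd ` Sb)"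
  shows "solution_CVOP C X \<Gamma>
           {x. \<exists>y. (x, y) \<in> Sb \<and> y \<notin> msum (\<Gamma> ` X) (C - {0})}"
    (is "solution_CVOP C X \<Gamma> ?Xb")
proof -
  have Sb: "Sb \<subseteq> S_a C X \<Gamma>"
    using assms(5) by (simp add: solution_Pv_def)
  have minimizers: "minimizer C X \<Gamma> x" if "x \<in> ?Xb" for x
  proof -
    from that obtain y where "(x, y) \<in> Sb" "y \<notin> msum (\<Gamma> ` X) (C - {0})"
      by blast
    then show ?thesis
      by (rule S_a_not_strictly_dominated(1)[OF subsetD[OF Sb]])
  qed
  obtain Xs where Xs: "infimizer C X \<Gamma> Xs" "\<forall>x\<in>Xs. minimizer C X \<Gamma> x"
    using assms(4) by (auto simp: solution_CVOP_def)
  have "?Xb \<subseteq> X"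
    using minimizers by (auto simp: minimizer_def)
  moreover have "\<Gamma> ` Xs \<subseteq> convex hull (\<Gamma> ` ?Xb)"
    unfolding snd_S_a_not_strictly_dominated[OF Sb, symmetric]
    using Xs(2) minimizer_in_convex_hull_not_strictly_dominated[OF assms(1,6)]
    by (intro image_subsetI) simp
  ultimately have "infimizer C X \<Gamma> ?Xb"
    by (rule infimizer_if_image_in_convex_hull[OF Xs(1)])
  with minimizers show ?thesis
    by (simp add: solution_CVOP_def)
qed

end
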